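(* Let $k$ be a field of characteristic $0$ and let $V\subset\mathbb{P}^n_k$ be a geometrically integral complete intersection of two quadrics $Q_1=Q_2=0$ which is not a cone. If the homogeneous polynomial $P(\lambda,\mu)=\det(\lambda Q_1+\mu Q_2)$ vanishes identically, then $V$ has infinitely many singular $k$-rational points.
   Context: Here $\det(\lambda Q_1+\mu Q_2)$ is the determinant of the symmetric matrix of the quadratic form $\lambda Q_1+\mu Q_2$ in $n+1$ variables. *)

theory Defs
  imports "HOL-Analysis.Analysis" "HOL-Library.Poly_Mapping"
          "HOL-Computational_Algebra.Polynomial"
begin

text \<open>Quadratic forms in the n+1 homogeneous coordinates of P^n are given by
  symmetric (n+1)x(n+1) matrices; the coordinates are indexed by a finite type 'n
  with CARD('n) = n+1.\<close>

definition qf_val :: "'a::comm_ring_1^'n^'n \<Rightarrow> 'a^'n \<Rightarrow> 'a" where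
  "qf_val A x = (\<Sum>i\<in>UNIV. \<Sum>j\<in>UNIV. A$i$j * x$i * x$j)"

type_synonym ('n, 'a) mpoly = "('n \<Rightarrow>\<^sub>0 nat) \<Rightarrow>\<^sub>0 'a"

definition mvar :: "'n \<Rightarrow> ('n, 'a::comm_ring_1) mpoly" where
  "mvar i = Poly_Mapping.single (Poly_Mapping.single i 1) 1"

definition mconst :: "'a \<Rightarrow> ('n, 'a::comm_ring_1) mpoly" where
  "mconst c = Poly_Mapping.single 0 c"

definition qf_poly :: "'a::comm_ring_1^'n::finite^'n \<Rightarrow> ('n, 'a) mpoly" where
  "qf_poly A = (\<Sum>i\<in>UNIV. \<Sum>j\<in>UNIV. mconst (A$i$j) * mvar i * mvar j)"

definition in_ideal2 :: "'r::comm_ring_1 \<Rightarrow> 'r \<Rightarrow> 'r \<Rightarrow> bool" where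
  "in_ideal2 f g p \<longleftrightarrow> (\<exists>a b. p = a * f + b * g)"

definition prime_ideal2 :: "'r::comm_ring_1 \<Rightarrow> 'r \<Rightarrow> bool" where
  "prime_ideal2 f g \<longleftrightarrow> \<not> in_ideal2 f g 1 \<and>
     (\<forall>p q. in_ideal2 f g (p * q) \<longrightarrow> in_ideal2 f g p \<or> in_ideal2 f g q)"

text \<open>(f, g) is a regular sequence: f is nonzero and g is a non-zero-divisor
  modulo f, with (f, g) a proper ideal (complete intersection of codimension 2).\<close>
definition regular_seq2 :: "'r::comm_ring_1 \<Rightarrow> 'r \<Rightarrow> bool" where
  "regular_seq2 f g \<longleftrightarrow> f \<noteq> 0 \<and> \<not> in_ideal2 f g 1 \<and>
     (\<forall>p. (\<exists>a. g * p = a * f) \<longrightarrow> (\<exists>a. p = a * f))"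

text \<open>Points of the affine cone over V = {Q1 = Q2 = 0} with coordinates in a ring.\<close>
definition cone_pts :: "'a::comm_ring_1^'n^'n \<Rightarrow> 'a^'n^'n \<Rightarrow> ('a^'n) set" where
  "cone_pts A1 A2 = {x. qf_val A1 x = 0 \<and> qf_val A2 x = 0}"

definition is_cone :: "'a::field^'n^'n \<Rightarrow> 'a^'n^'n \<Rightarrow> bool" where
  "is_cone A1 A2 \<longleftrightarrow> (\<exists>p. p \<noteq> 0 \<and>
     (\<forall>x\<in>cone_pts A1 A2. \<forall>s t. s *s p + t *s x \<in> cone_pts A1 A2))"

text \<open>Singular points of the complete intersection (Jacobian criterion): the
  gradients (A_i + A_i^T) x of the two forms are linearly dependent.\<close>
definition sing_pts :: "'a::field^'n^'n \<Rightarrow> 'a^'n^'n \<Rightarrow> ('a^'n) set" where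
  "sing_pts A1 A2 = {x. x \<noteq> 0 \<and> x \<in> cone_pts A1 A2 \<and>
     (\<exists>a b. (a, b) \<noteq> (0, 0) \<and>
        a *s ((A1 + transpose A1) *v x) + b *s ((A2 + transpose A2) *v x) = 0)}"

text \<open>The point of P^n represented by a nonzero vector.\<close>
definition proj_pt :: "'a::field^'n \<Rightarrow> ('a^'n) set" where
  "proj_pt x = {c *s x | c. c \<noteq> 0}"

definition map_mat :: "('a \<Rightarrow> 'b) \<Rightarrow> 'a^'n^'m \<Rightarrow> 'b^'n^'m" where
  "map_mat f A = (\<chi> i j. f (A$i$j))"

end

theory Submission
  imports Defs
begin

text \<open>Since det (A1 + t A2) vanishes identically, every member of the pencil has a nonzero
  kernel vector x_t. A common kernel vector of A1 and A2 would be a vertex of V, so there is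
  none; hence distinct parameters give non-proportional kernel vectors, and by symmetry kernel
  vectors of distinct members are orthogonal for A2. Among any n + 2 of them there is a linear
  dependence, and pairing it with one of its members shows that member is A2-isotropic. So all
  but finitely many x_t satisfy Q2(x_t) = 0, hence Q1(x_t) = -t Q2(x_t) = 0, and a kernel vector
  of the pencil lying on V is singular. In characteristic 0 there are infinitely many t.\<close>

definition bilinear_form :: "'a::comm_ring_1^'n^'n \<Rightarrow> 'a^'n \<Rightarrow> 'a^'n \<Rightarrow> 'a" where
  "bilinear_form A x y = (\<Sum>i\<in>UNIV. x$i * (A *v y)$i)"

lemma qf_val_eq_bilinear_form: "qf_val A x = bilinear_form A x x"
  by (simp add: qf_val_def bilinear_form_def matrix_vector_mult_def sum_distrib_left mult_ac)

lemma bilinear_form_sym: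
  assumes "transpose A = A"
  shows "bilinear_form A x y = bilinear_form A y x"
proof -
  have A_sym: "A$i$j = A$j$i" for i j
    using assms by (metis transpose_def vec_lambda_beta)
  have "bilinear_form A x y = (\<Sum>i\<in>UNIV. \<Sum>j\<in>UNIV. A$i$j * x$i * y$j)"
    by (simp add: bilinear_form_def matrix_vector_mult_def sum_distrib_left mult_ac)
  also have "\<dots> = (\<Sum>j\<in>UNIV. \<Sum>i\<in>UNIV. A$j$i * y$j * x$i)"
    by (subst sum.swap) (simp add: A_sym mult_ac)
  also have "\<dots> = bilinear_form A y x"
    by (simp add: bilinear_form_def matrix_vector_mult_def sum_distrib_left mult_ac)
  finally show ?thesis .
qed

lemma bilinear_form_sum_right:
  fixes A :: "'a::field^'n^'n"
  shows "bilinear_form A x (\<Sum>v\<in>S. c v *s v) = (\<Sum>v\<in>S. c v * bilinear_form A x v)"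
proof (induction S rule: infinite_finite_induct)
  case (insert v S)
  then show ?case
    by (simp add: bilinear_form_def matrix_vector_right_distrib vector_scalar_commute
        sum.distrib sum_distrib_left algebra_simps)
qed (simp_all add: bilinear_form_def)

lemma isotropic_of_pairwise_orthogonal:
  fixes S :: "('a::field^'n) set"
  assumes "finite S" and "card S > CARD('n)"
    and orth: "\<And>v w. v \<in> S \<Longrightarrow> w \<in> S \<Longrightarrow> v \<noteq> w \<Longrightarrow> bilinear_form A v w = 0"
  shows "\<exists>v\<in>S. bilinear_form A v v = 0"
proof -
  have "vec.dependent S"
    using vec.dependent_biggerset_general[of S] dim_subset_UNIV_cart_gen[of S] assms(2) by linarith
  then obtain c v where v: "v \<in> S" "c v \<noteq> 0" and rel: "(\<Sum>w\<in>S. c w *s w) = 0"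
    using vec.dependent_finite[OF assms(1)] by blast
  have "0 = bilinear_form A v (\<Sum>w\<in>S. c w *s w)"
    by (simp add: rel bilinear_form_def)
  also have "\<dots> = c v * bilinear_form A v v + (\<Sum>w\<in>S - {v}. c w * bilinear_form A v w)"
    unfolding bilinear_form_sum_right by (simp add: sum.remove[OF assms(1) v(1)])
  also have "\<dots> = c v * bilinear_form A v v"
    by (subst sum.neutral) (auto intro: orth[OF v(1)])
  finally show ?thesis
    using v by auto
qed

lemma det_eq_0_imp_nonzero_kernel:
  fixes M :: "'a::field^'n^'n"
  assumes "det M = 0"
  shows "\<exists>x. x \<noteq> 0 \<and> M *v x = 0"
proof -
  have "\<nexists>B. B ** M = mat 1"
    using assms by (simp add: invertible_left_inverse[symmetric] invertible_det_nz)
  then show ?thesis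
    unfolding matrix_left_invertible_ker by blast
qed

definition pencil_kernel :: "'a::field^'n^'n \<Rightarrow> 'a^'n^'n \<Rightarrow> 'a \<Rightarrow> 'a^'n \<Rightarrow> bool" where
  "pencil_kernel A1 A2 t x \<longleftrightarrow> x \<noteq> 0 \<and> A1 *v x + t *s (A2 *v x) = 0"

lemma pencil_kernel_exists:
  assumes "det (\<chi> i j. A1$i$j + t * A2$i$j) = 0"
  shows "\<exists>x. pencil_kernel A1 A2 t x"
proof -
  have "(\<chi> i j. A1$i$j + t * A2$i$j) *v x = A1 *v x + t *s (A2 *v x)" for x
    by (simp add: vec_eq_iff matrix_vector_mult_def sum.distrib sum_distrib_left algebra_simps)
  moreover obtain x where "x \<noteq> 0" "(\<chi> i j. A1$i$j + t * A2$i$j) *v x = 0"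
    using det_eq_0_imp_nonzero_kernel[OF assms] by blast
  ultimately show ?thesis
    unfolding pencil_kernel_def by auto
qed

lemma pencil_kernel_smult:
  assumes "pencil_kernel A1 A2 t x" and "c \<noteq> 0"
  shows "pencil_kernel A1 A2 t (c *s x)"
proof -
  have "A1 *v (c *s x) + t *s (A2 *v (c *s x)) = c *s (A1 *v x + t *s (A2 *v x))"
    by (simp add: vector_scalar_commute vec_eq_iff algebra_simps)
  then show ?thesis
    using assms unfolding pencil_kernel_def by simp
qed

lemma pencil_kernel_param_unique:
  assumes no_common_kernel: "\<nexists>x. x \<noteq> 0 \<and> A1 *v x = 0 \<and> A2 *v x = 0"
    and "pencil_kernel A1 A2 s x" and "pencil_kernel A1 A2 t x"
  shows "s = t"
proof (rule ccontr)
  assume "s \<noteq> t"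
  have "(s - t) *s (A2 *v x) = (A1 *v x + s *s (A2 *v x)) - (A1 *v x + t *s (A2 *v x))"
    by (simp add: vec_eq_iff algebra_simps)
  then have "A2 *v x = 0"
    using assms(2,3) \<open>s \<noteq> t\<close> unfolding pencil_kernel_def by (simp add: vec_eq_iff)
  moreover have "A1 *v x = 0"
    using assms(2) calculation unfolding pencil_kernel_def by simp
  ultimately show False
    using no_common_kernel assms(2) unfolding pencil_kernel_def by blast
qed

lemma bilinear_form_pencil_kernel:
  assumes "pencil_kernel A1 A2 t x"
  shows "bilinear_form A1 y x + t * bilinear_form A2 y x = 0"
proof -
  have "bilinear_form A1 y x + t * bilinear_form A2 y x
      = (\<Sum>i\<in>UNIV. y$i * (A1 *v x + t *s (A2 *v x))$i)"
    by (simp add: bilinear_form_def sum_distrib_left sum.distrib algebra_simps)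
  then show ?thesis
    using assms unfolding pencil_kernel_def by simp
qed

lemma pencil_kernel_orthogonal:
  assumes sym1: "transpose A1 = A1" and sym2: "transpose A2 = A2"
    and x: "pencil_kernel A1 A2 s x" and y: "pencil_kernel A1 A2 t y" and "s \<noteq> t"
  shows "bilinear_form A2 x y = 0"
proof -
  have "(t - s) * bilinear_form A2 x y
      = (bilinear_form A1 x y + t * bilinear_form A2 x y)
        - (bilinear_form A1 y x + s * bilinear_form A2 y x)"
    using bilinear_form_sym[OF sym1, of x y] bilinear_form_sym[OF sym2, of x y]
    by (simp add: algebra_simps)
  then show ?thesis
    using bilinear_form_pencil_kernel[OF x] bilinear_form_pencil_kernel[OF y] \<open>s \<noteq> t\<close> by simp
qed

lemma finite_anisotropic_pencil_kernels:
  fixes A1 A2 :: "'a::field^'n^'n"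
  assumes sym1: "transpose A1 = A1" and sym2: "transpose A2 = A2"
    and no_common_kernel: "\<nexists>x. x \<noteq> 0 \<and> A1 *v x = 0 \<and> A2 *v x = 0"
    and X: "\<And>t. pencil_kernel A1 A2 t (X t)"
  shows "finite {t. qf_val A2 (X t) \<noteq> 0}"
proof (rule ccontr)
  assume "infinite {t. qf_val A2 (X t) \<noteq> 0}"
  then obtain B where B: "B \<subseteq> {t. qf_val A2 (X t) \<noteq> 0}" "finite B" "card B = CARD('n) + 1"
    using infinite_arbitrarily_large by metis
  have "inj X"
    using pencil_kernel_param_unique[OF no_common_kernel] X by (metis injI)
  then have "card (X ` B) = CARD('n) + 1"
    using B(3) by (simp add: card_image inj_on_subset)
  moreover have "bilinear_form A2 v w = 0" if vw: "v \<in> X ` B" "w \<in> X ` B" "v \<noteq> w" for v w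
  proof -
    obtain s t where "v = X s" "w = X t" "s \<noteq> t"
      using vw by blast
    then show ?thesis
      using pencil_kernel_orthogonal[OF sym1 sym2 X X] by simp
  qed
  ultimately have "\<exists>v\<in>X ` B. bilinear_form A2 v v = 0"
    using B(2) by (intro isotropic_of_pairwise_orthogonal) simp_all
  then show False
    using B(1) by (auto simp: qf_val_eq_bilinear_form)
qed

lemma pencil_kernel_in_sing_pts:
  fixes A1 A2 :: "'a::field^'n^'n"
  assumes sym1: "transpose A1 = A1" and sym2: "transpose A2 = A2"
    and x: "pencil_kernel A1 A2 t x" and Q2: "qf_val A2 x = 0"
  shows "x \<in> sing_pts A1 A2"
proof -
  have Q1: "qf_val A1 x = 0"
    using bilinear_form_pencil_kernel[OF x, of x] Q2 by (simp add: qf_val_eq_bilinear_form)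
  have "1 *s ((A1 + transpose A1) *v x) + t *s ((A2 + transpose A2) *v x)
      = (A1 *v x + t *s (A2 *v x)) + (A1 *v x + t *s (A2 *v x))"
    unfolding sym1 sym2 matrix_vector_mult_add_rdistrib by (simp add: vec_eq_iff algebra_simps)
  also have "\<dots> = 0"
    using x unfolding pencil_kernel_def by simp
  finally have "(1::'a, t) \<noteq> (0, 0) \<and>
      1 *s ((A1 + transpose A1) *v x) + t *s ((A2 + transpose A2) *v x) = 0"
    by simp
  then show ?thesis
    using x Q1 Q2 unfolding sing_pts_def cone_pts_def pencil_kernel_def by blast
qed

lemma qf_val_line_through_kernel:
  fixes A :: "'a::field^'n^'n"
  assumes "transpose A = A" and "A *v p = 0" and "qf_val A y = 0"
  shows "qf_val A (a *s p + b *s y) = 0"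
proof -
  have "A *v (a *s p + b *s y) = b *s (A *v y)"
    by (simp add: matrix_vector_right_distrib vector_scalar_commute assms(2))
  then have "qf_val A (a *s p + b *s y) = (\<Sum>i\<in>UNIV. (a * p$i + b * y$i) * (b * (A *v y)$i))"
    by (simp add: qf_val_eq_bilinear_form bilinear_form_def)
  also have "\<dots> = a * b * bilinear_form A p y + b * b * qf_val A y"
    by (simp add: qf_val_eq_bilinear_form bilinear_form_def sum.distrib sum_distrib_left
        ring_distribs mult_ac)
  also have "bilinear_form A p y = 0"
    using bilinear_form_sym[OF assms(1), of p y] assms(2) by (simp add: bilinear_form_def)
  finally show ?thesis
    using assms(3) by simp
qed

lemma is_cone_of_common_kernel:
  fixes B1 B2 :: "'a::field^'n^'n"
  assumes "transpose B1 = B1" and "transpose B2 = B2"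
    and "p \<noteq> 0" and "B1 *v p = 0" and "B2 *v p = 0"
  shows "is_cone B1 B2"
proof -
  have "s *s p + t *s x \<in> cone_pts B1 B2" if "x \<in> cone_pts B1 B2" for x s t
    using that qf_val_line_through_kernel[OF assms(1,4)] qf_val_line_through_kernel[OF assms(2,5)]
    by (simp add: cone_pts_def)
  then show ?thesis
    using assms(3) unfolding is_cone_def by blast
qed

lemma transpose_map_mat: "transpose (map_mat f A) = map_mat f (transpose A)"
  by (simp add: vec_eq_iff transpose_def map_mat_def)

lemma map_mat_mult_vec:
  fixes f :: "'a::comm_ring_1 \<Rightarrow> 'b::comm_ring_1"
  assumes add: "\<And>a b. f (a + b) = f a + f b" and mult: "\<And>a b. f (a * b) = f a * f b"
  shows "map_mat f A *v (\<chi> i. f (x$i)) = (\<chi> i. f ((A *v x)$i))"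
proof -
  interpret additive f
    using add by unfold_locales
  show ?thesis
    by (simp add: vec_eq_iff matrix_vector_mult_def map_mat_def sum mult)
qed

lemma is_cone_map_mat_of_common_kernel:
  fixes A1 A2 :: "'k::field^'n^'n" and f :: "'k \<Rightarrow> 'K::field"
  assumes "transpose A1 = A1" and "transpose A2 = A2"
    and add: "\<And>a b. f (a + b) = f a + f b" and mult: "\<And>a b. f (a * b) = f a * f b"
    and "inj f" and x: "x \<noteq> 0" "A1 *v x = 0" "A2 *v x = 0"
  shows "is_cone (map_mat f A1) (map_mat f A2)"
proof (rule is_cone_of_common_kernel)
  interpret additive f
    using add by unfold_locales
  show "(\<chi> i. f (x$i)) \<noteq> 0"
    using x(1) injD[OF \<open>inj f\<close>, of _ 0] zero by (auto simp: vec_eq_iff)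
  show "map_mat f A1 *v (\<chi> i. f (x$i)) = 0" "map_mat f A2 *v (\<chi> i. f (x$i)) = 0"
    using x(2,3) zero by (simp_all add: map_mat_mult_vec[OF add mult] vec_eq_iff)
qed (simp_all add: transpose_map_mat assms(1,2))

lemma proj_pt_eq_imp_smult:
  assumes "proj_pt x = proj_pt y"
  shows "\<exists>c. c \<noteq> 0 \<and> x = c *s y"
proof -
  have "x \<in> proj_pt x"
    unfolding proj_pt_def by (auto intro: exI[of _ 1])
  then show ?thesis
    using assms unfolding proj_pt_def by blast
qed

lemma inj_proj_pt_pencil_kernels:
  assumes no_common_kernel: "\<nexists>x. x \<noteq> 0 \<and> A1 *v x = 0 \<and> A2 *v x = 0"
    and X: "\<And>t. pencil_kernel A1 A2 t (X t)"
  shows "inj (proj_pt \<circ> X)"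
proof (rule injI)
  fix s t
  assume "(proj_pt \<circ> X) s = (proj_pt \<circ> X) t"
  then obtain c where "c \<noteq> 0" "X s = c *s X t"
    using proj_pt_eq_imp_smult unfolding comp_apply by blast
  then have "pencil_kernel A1 A2 t (X s)"
    using pencil_kernel_smult[OF X] by simp
  then show "s = t"
    using pencil_kernel_param_unique[OF no_common_kernel X] by blast
qed

theorem lemma5p9:
  fixes A1 A2 :: "'k::field_char_0^'n::finite^'n"
    and emb :: "'k \<Rightarrow> 'K::alg_closed_field"
  assumes sym1: "transpose A1 = A1" and sym2: "transpose A2 = A2"
    and emb_hom: "\<And>a b. emb (a + b) = emb a + emb b" "\<And>a b. emb (a * b) = emb a * emb b"
      "emb 1 = 1"
    and emb_inj: "inj emb"
    and ci: "regular_seq2 (qf_poly A1) (qf_poly A2)"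
    and geom_int: "prime_ideal2 (qf_poly (map_mat emb A1)) (qf_poly (map_mat emb A2))"
    and not_cone: "\<not> is_cone (map_mat emb A1) (map_mat emb A2)"
    and det_zero: "\<forall>l m. det (\<chi> i j. l * A1$i$j + m * A2$i$j) = 0"
  shows "infinite (proj_pt ` sing_pts A1 A2)"
proof -
  have no_common_kernel: "\<nexists>x. x \<noteq> 0 \<and> A1 *v x = 0 \<and> A2 *v x = 0"
    using is_cone_map_mat_of_common_kernel[OF sym1 sym2 emb_hom(1,2) emb_inj] not_cone by blast
  have "\<exists>x. pencil_kernel A1 A2 t x" for t
    using pencil_kernel_exists[of A1 t A2] det_zero[rule_format, of 1 t] by simp
  then obtain X where X: "\<And>t. pencil_kernel A1 A2 t (X t)"
    by metis
  define G where "G = {t. qf_val A2 (X t) = 0}"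
  have "infinite G"
    using finite_Collect_not[OF finite_anisotropic_pencil_kernels[OF sym1 sym2 no_common_kernel X]]
      infinite_UNIV_char_0[where 'a='k]
    by (simp add: G_def)
  moreover have "inj_on (proj_pt \<circ> X) G"
    using inj_proj_pt_pencil_kernels[OF no_common_kernel X] by (rule inj_on_subset) simp
  ultimately have "infinite ((proj_pt \<circ> X) ` G)"
    by (metis finite_imageD)
  moreover have "X ` G \<subseteq> sing_pts A1 A2"
    using pencil_kernel_in_sing_pts[OF sym1 sym2 X] by (auto simp: G_def)
  then have "(proj_pt \<circ> X) ` G \<subseteq> proj_pt ` sing_pts A1 A2"
    unfolding image_comp[symmetric] by (rule image_mono)
  ultimately show ?thesis
    by (rule infinite_super[rotated])
qed

end
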